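(* Let $N\ge 2$ and let $p$ be a star path of length $N$ with edge matrix $E$. Let $K$ be the smallest positive integer such that circularly shifting the columns of $E$ by $K$ (i.e. replacing column $n$ by column $(n+K)\bmod N$ for every $n$) yields $E$ again. Then the order of rotational symmetry of $p$ is $O_{rot}=N/K$.
   Context: A path of length $N$ is a vector $p=(p_0,\dots,p_{N-1})$ whose entries are the integers $0,\dots,N-1$ in some order; indices are cyclic, $p_N=p_0$, $s_{-1}=s_{N-1}$; $x\bmod N$ denotes the remainder in $\{0,\dots,N-1\}$. Nodes $0,\dots,N-1$ are placed at equally spaced points clockwise around a circle; the shape of $p$ is the set of chords joining node $p_n$ to node $p_{n+1}$. The order of rotational symmetry $O_{rot}$ is the number of angles $\theta\in[0,2\pi)$ such that the rotation by $\theta$ about the center of the circle maps the shape onto itself. The path differences are $d_n=p_{n+1}-p_n$, and the steps are $s_n=d_n$ if $|d_n|<N/2$; $s_n=N/2$ if $|d_n|=N/2$; $s_n=d_n-N$ if $d_n>N/2$; $s_n=d_n+N$ if $d_n<-N/2$. $p$ is a star path if $|s_n|\neq1$ for all $n$. The edge matrix $E=(e_{in})\in\mathbb{Z}^{2\times N}$: for node $n$ let $k$ be the index with $p_k=n$; take $s_k$ and $-s_{k-1}$, replace each by $0$ if its absolute value equals $N/2$, and let $e_{1n}\le e_{2n}$ be these two integers sorted in nondecreasing order. *)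

theory Defs
  imports "HOL-Analysis.Analysis"
begin

definition is_path :: "nat \<Rightarrow> nat list \<Rightarrow> bool" where
  "is_path N p \<longleftrightarrow> length p = N \<and> distinct p \<and> set p = {..<N}"

definition pdiff :: "nat \<Rightarrow> nat list \<Rightarrow> nat \<Rightarrow> int" where
  "pdiff N p n = int (p ! ((n + 1) mod N)) - int (p ! (n mod N))"

text \<open>Steps s_n.  The condition |d| = N/2 is written 2|d| = N (integer arithmetic);
  in that case N is even and N/2 = N div 2.\<close>
definition step :: "nat \<Rightarrow> nat list \<Rightarrow> nat \<Rightarrow> int" where
  "step N p n = (let d = pdiff N p n in
     if 2 * \<bar>d\<bar> < int N then d
     else if 2 * \<bar>d\<bar> = int N then int N div 2
     else if 2 * d > int N then d - int N
     else d + int N)"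

definition star_path :: "nat \<Rightarrow> nat list \<Rightarrow> bool" where
  "star_path N p \<longleftrightarrow> is_path N p \<and> (\<forall>n<N. \<bar>step N p n\<bar> \<noteq> 1)"

definition node_index :: "nat \<Rightarrow> nat list \<Rightarrow> nat \<Rightarrow> nat" where
  "node_index N p n = (THE k. k < N \<and> p ! k = n)"

definition zero_half :: "nat \<Rightarrow> int \<Rightarrow> int" where
  "zero_half N x = (if 2 * \<bar>x\<bar> = int N then 0 else x)"

text \<open>Column n of the edge matrix: the pair (e_(1n), e_(2n)) with e_(1n) \<le> e_(2n).
  Index k - 1 is taken cyclically: (k + N - 1) mod N.\<close>
definition edge_col :: "nat \<Rightarrow> nat list \<Rightarrow> nat \<Rightarrow> int \<times> int" where
  "edge_col N p n = (let k = node_index N p n;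
                         a = zero_half N (step N p k);
                         b = zero_half N (- step N p ((k + N - 1) mod N))
                     in (min a b, max a b))"

definition node_pt :: "nat \<Rightarrow> nat \<Rightarrow> complex" where
  "node_pt N n = cis (- 2 * pi * real n / real N)"

definition shape :: "nat \<Rightarrow> nat list \<Rightarrow> complex set set" where
  "shape N p = {closed_segment (node_pt N (p ! n)) (node_pt N (p ! ((n + 1) mod N))) | n. n < N}"

definition O_rot :: "nat \<Rightarrow> nat list \<Rightarrow> nat" where
  "O_rot N p = card {\<theta>::real. 0 \<le> \<theta> \<and> \<theta> < 2 * pi \<and>
                     (\<lambda>C. (\<lambda>z. cis \<theta> * z) ` C) ` shape N p = shape N p}"

end

theory Submission
  imports Defs
begin

(* Column n of the edge matrix is the sorted pair of offsets from node n to its two path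
   neighbours, each read as a residue mod N in (-N/2, N/2) with N/2 sent to 0.  Seen from a
   fixed node, such an offset determines the neighbour.  Hence shifting the columns by j
   preserves E exactly when the node map n \<mapsto> n + j mod N permutes the edges of p, i.e. when
   the rotation carrying node n to node n + j is a symmetry of the shape; and every symmetry
   angle in [0, 2pi) is of this form, since it must carry some node to a node.  The admissible
   shifts j < N are the multiples of the least one K, which divides N, so there are N/K. *)

definition signed_residue :: "nat \<Rightarrow> int \<Rightarrow> int" where
  "signed_residue N r = (if 2 * r < int N then r else if 2 * r = int N then 0 else r - int N)"

definition chord_offset :: "nat \<Rightarrow> nat \<Rightarrow> nat \<Rightarrow> int" where
  "chord_offset N a b = signed_residue N ((int b - int a) mod int N)"

lemma mod_of_abs_less:
  assumes "\<bar>d\<bar> < int N" shows "d mod int N = (if 0 \<le> d then d else d + int N)"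
proof (cases "0 \<le> d")
  case False
  have "d mod int N = (d + int N) mod int N" by simp
  also have "\<dots> = d + int N" using assms False by (intro mod_pos_pos_trivial) auto
  finally show ?thesis using False by simp
qed (use assms in simp)

lemma zero_half_step:
  assumes "\<bar>pdiff N p k\<bar> < int N"
  shows "zero_half N (step N p k) = signed_residue N (pdiff N p k mod int N)"
    and "zero_half N (- step N p k) = signed_residue N (- pdiff N p k mod int N)"
proof -
  have "2 * \<bar>pdiff N p k\<bar> = int N \<Longrightarrow> int N div 2 = \<bar>pdiff N p k\<bar>" by linarith
  then show "zero_half N (step N p k) = signed_residue N (pdiff N p k mod int N)"
    and "zero_half N (- step N p k) = signed_residue N (- pdiff N p k mod int N)"
    using assms mod_of_abs_less[OF assms] mod_of_abs_less[of "- pdiff N p k" N]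
    by (auto simp: step_def Let_def signed_residue_def zero_half_def)
qed

lemma inj_on_chord_offset:
  assumes "a < N" shows "inj_on (chord_offset N a) ({..<N} - {a})"
proof (rule inj_onI)
  fix b c assume b: "b \<in> {..<N} - {a}" and c: "c \<in> {..<N} - {a}"
    and eq: "chord_offset N a b = chord_offset N a c"
  have range: "(int x - int a) mod int N \<in> {1..<int N}" if "x \<in> {..<N} - {a}" for x
  proof -
    have "\<bar>int x - int a\<bar> < int N" using that assms by auto
    then have "\<not> int N dvd int x - int a"
      using that dvd_imp_le_int[of "int x - int a" "int N"] by auto
    then have "(int x - int a) mod int N \<noteq> 0" by (simp add: mod_eq_0_iff_dvd)
    moreover have "0 \<le> (int x - int a) mod int N" "(int x - int a) mod int N < int N"
      using assms by simp_all
    ultimately show ?thesis by simp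
  qed
  have "inj_on (signed_residue N) {1..<int N}"
    by (auto simp: inj_on_def signed_residue_def split: if_splits)
  then have "(int b - int a) mod int N = (int c - int a) mod int N"
    using eq range[OF b] range[OF c] by (auto simp: chord_offset_def dest: inj_onD)
  then have "(int b - int a + int a) mod int N = (int c - int a + int a) mod int N"
    by (rule mod_add_cong) simp
  then show "b = c" using b c by simp
qed

definition cyclic_shift :: "nat \<Rightarrow> nat \<Rightarrow> nat \<Rightarrow> nat" where
  "cyclic_shift N j n = (n + j) mod N"

lemma cyclic_shift_less: "0 < N \<Longrightarrow> cyclic_shift N j n < N"
  by (simp add: cyclic_shift_def)

lemma inj_on_cyclic_shift: "inj_on (cyclic_shift N j) {..<N}"
proof (rule inj_onI)
  fix x y assume "x \<in> {..<N}" "y \<in> {..<N}" "cyclic_shift N j x = cyclic_shift N j y"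
  then have "(x + j) mod N = (y + j) mod N" "x < N" "y < N" by (simp_all add: cyclic_shift_def)
  then have "(int x + int j) mod int N = (int y + int j) mod int N"
    by (metis of_nat_add of_nat_mod)
  then have "(int x + int j - int j) mod int N = (int y + int j - int j) mod int N"
    by (rule mod_diff_cong) (rule refl)
  then show "x = y" using \<open>x < N\<close> \<open>y < N\<close> by simp
qed

lemma cyclic_shift_image:
  assumes "0 < N" shows "cyclic_shift N j ` {..<N} = {..<N}"
  by (rule endo_inj_surj[OF finite_lessThan _ inj_on_cyclic_shift])
    (use assms cyclic_shift_less in blast)

lemma cyclic_shift_add: "cyclic_shift N (a + b) n = cyclic_shift N b (cyclic_shift N a n)"
  by (simp add: cyclic_shift_def mod_add_left_eq add.assoc)

lemma chord_offset_cyclic_shift: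
  "chord_offset N (cyclic_shift N j a) (cyclic_shift N j b) = chord_offset N a b"
proof -
  have "(int ((b + j) mod N) - int ((a + j) mod N)) mod int N
      = ((int b + int j) mod int N - (int a + int j) mod int N) mod int N"
    by (simp only: of_nat_mod of_nat_add)
  also have "\<dots> = (int b - int a) mod int N" by (simp add: mod_diff_eq)
  finally show ?thesis by (simp add: chord_offset_def cyclic_shift_def)
qed

definition cyclic_period :: "nat \<Rightarrow> (nat \<Rightarrow> 'a) \<Rightarrow> nat \<Rightarrow> bool" where
  "cyclic_period N f j \<longleftrightarrow> (\<forall>n<N. f (cyclic_shift N j n) = f n)"

lemma cyclic_period_0: "cyclic_period N f 0"
  by (simp add: cyclic_period_def cyclic_shift_def)

lemma cyclic_period_self: "cyclic_period N f N"
  by (simp add: cyclic_period_def cyclic_shift_def)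

lemma cyclic_period_add:
  assumes "cyclic_period N f a" "cyclic_period N f b" shows "cyclic_period N f (a + b)"
  unfolding cyclic_period_def
proof (intro allI impI)
  fix n assume "n < N"
  then have "cyclic_shift N a n < N" by (simp add: cyclic_shift_less)
  then show "f (cyclic_shift N (a + b) n) = f n"
    using assms \<open>n < N\<close> by (simp add: cyclic_period_def cyclic_shift_add)
qed

lemma cyclic_period_diff:
  assumes "cyclic_period N f a" "cyclic_period N f b" "b \<le> a" shows "cyclic_period N f (a - b)"
  unfolding cyclic_period_def
proof (intro allI impI)
  fix n assume "n < N"
  then have "cyclic_shift N (a - b) n < N" by (simp add: cyclic_shift_less)
  moreover have "cyclic_shift N b (cyclic_shift N (a - b) n) = cyclic_shift N a n"
    using assms(3) by (simp flip: cyclic_shift_add)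
  ultimately show "f (cyclic_shift N (a - b) n) = f n"
    using assms(1,2) \<open>n < N\<close> by (metis cyclic_period_def)
qed

lemma cyclic_period_mult: "cyclic_period N f K \<Longrightarrow> cyclic_period N f (K * i)"
  by (induction i) (simp_all add: cyclic_period_0 cyclic_period_add)

lemma least_cyclic_period:
  assumes "0 < N" and K: "K = (LEAST K. 0 < K \<and> cyclic_period N f K)"
  shows "0 < K" and "cyclic_period N f j \<longleftrightarrow> K dvd j"
proof -
  have K_period: "0 < K \<and> cyclic_period N f K"
    unfolding K by (rule LeastI[of _ N]) (simp add: assms(1) cyclic_period_self)
  then show "0 < K" ..
  show "cyclic_period N f j \<longleftrightarrow> K dvd j"
  proof
    assume "cyclic_period N f j"
    moreover have "cyclic_period N f (K * (j div K))" using K_period cyclic_period_mult by blast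
    ultimately have "cyclic_period N f (j - K * (j div K))" by (simp add: cyclic_period_diff)
    then have "cyclic_period N f (j mod K)" by (simp add: minus_mult_div_eq_mod)
    moreover have "j mod K < K" using K_period by simp
    ultimately have "\<not> 0 < j mod K" using K not_less_Least by blast
    then show "K dvd j" by (simp add: dvd_eq_mod_eq_0)
  qed (use K_period cyclic_period_mult in blast)
qed

lemma card_multiples_less:
  fixes K N :: nat assumes "0 < K" "K dvd N"
  shows "card {j. j < N \<and> K dvd j} = N div K"
proof -
  have "K * i < K * (N div K) \<longleftrightarrow> i < N div K" for i using assms(1) by simp
  then have less_iff: "K * i < N \<longleftrightarrow> i < N div K" for i
    using assms(2) by (simp only: dvd_mult_div_cancel)
  have "{j. j < N \<and> K dvd j} = (\<lambda>i. K * i) ` {..<N div K}"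
  proof (intro equalityI subsetI)
    fix j assume "j \<in> {j. j < N \<and> K dvd j}"
    then have "j < N" "K dvd j" by simp_all
    obtain i where "j = K * i" using \<open>K dvd j\<close> by (rule dvdE)
    then have "i < N div K" using less_iff \<open>j < N\<close> by simp
    then show "j \<in> (\<lambda>i. K * i) ` {..<N div K}" using \<open>j = K * i\<close> by blast
  next
    fix j assume "j \<in> (\<lambda>i. K * i) ` {..<N div K}"
    then obtain i where "i < N div K" "j = K * i" by blast
    then show "j \<in> {j. j < N \<and> K dvd j}" using less_iff by simp
  qed
  moreover have "inj_on (\<lambda>i. K * i) {..<N div K}" using assms(1) by (simp add: inj_on_def)
  ultimately show ?thesis by (simp add: card_image)
qed

definition node_pairs :: "nat \<Rightarrow> nat set set" where
  "node_pairs N = {{a, b} | a b. a < N \<and> b < N}"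

definition chord :: "nat \<Rightarrow> nat set \<Rightarrow> complex set" where
  "chord N e = convex hull (node_pt N ` e)"

(* The angle in [0, 2pi) of the rotation carrying node n to node n + j; the nodes are numbered
   clockwise, hence N - j. *)
definition rotation_angle :: "nat \<Rightarrow> nat \<Rightarrow> real" where
  "rotation_angle N j = 2 * pi * real ((N - j) mod N) / real N"

lemma node_pt_add: "node_pt N (a + b) = node_pt N a * node_pt N b"
proof -
  have "- 2 * pi * real (a + b) / real N = - 2 * pi * real a / real N + - 2 * pi * real b / real N"
    by (simp add: algebra_simps diff_divide_distrib)
  then show ?thesis by (simp add: node_pt_def cis_mult)
qed

lemma node_pt_mult_self:
  assumes "0 < N" shows "node_pt N (N * m) = 1"
proof -
  have "- 2 * pi * real (N * m) / real N = 2 * pi * (- real m)" using assms by simp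
  moreover have "cis (2 * pi * (- real m)) = 1" by (rule cis_multiple_2pi) simp
  ultimately show ?thesis by (simp only: node_pt_def)
qed

lemma node_pt_mod:
  assumes "0 < N" shows "node_pt N (n mod N) = node_pt N n"
proof -
  have "node_pt N n = node_pt N (n mod N + N * (n div N))" by simp
  also have "\<dots> = node_pt N (n mod N)" using assms by (simp only: node_pt_add node_pt_mult_self) simp
  finally show ?thesis ..
qed

lemma cis_rotation_angle:
  assumes "j < N" shows "cis (rotation_angle N j) = node_pt N j"
proof (cases "j = 0")
  case False
  then have "rotation_angle N j = - 2 * pi * real j / real N + 2 * pi"
    using assms by (simp add: rotation_angle_def field_simps)
  then have "cis (rotation_angle N j) = cis (- 2 * pi * real j / real N) * cis (2 * pi)"
    by (simp only: cis_mult)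
  then show ?thesis by (simp add: node_pt_def)
qed (simp add: rotation_angle_def node_pt_def)

lemma rotation_angle_bounds:
  assumes "0 < N" shows "0 \<le> rotation_angle N j" "rotation_angle N j < 2 * pi"
proof -
  have "real ((N - j) mod N) / real N < 1" using assms by simp
  then have "2 * pi * (real ((N - j) mod N) / real N) < 2 * pi * 1"
    by (intro mult_strict_left_mono) simp_all
  then show "rotation_angle N j < 2 * pi" by (simp add: rotation_angle_def)
qed (simp add: rotation_angle_def)

lemma inj_on_rotation_angle: "inj_on (rotation_angle N) {..<N}"
proof (rule inj_onI)
  fix x y assume xy: "x \<in> {..<N}" "y \<in> {..<N}" "rotation_angle N x = rotation_angle N y"
  then have "real ((N - x) mod N) = real ((N - y) mod N)" by (simp add: rotation_angle_def)
  then have "(N - x) mod N = (N - y) mod N" by (simp only: of_nat_eq_iff)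
  moreover have "(N - (N - z) mod N) mod N = z" if "z < N" for z
    using that by (cases "z = 0") simp_all
  ultimately show "x = y" using xy(1,2) by (metis lessThan_iff)
qed

lemma cis_eq_imp_eq:
  assumes "0 \<le> x" "x < 2 * pi" "0 \<le> y" "y < 2 * pi" "cis x = cis y"
  shows "x = y"
proof -
  have "Arg2pi (cis t) = t" if "0 \<le> t" "t < 2 * pi" for t
    by (rule Arg2pi_unique[of 1]) (use that in \<open>simp_all add: cis_conv_exp\<close>)
  then show ?thesis using assms by metis
qed

lemma inj_on_node_pt: "inj_on (node_pt N) {..<N}"
proof (rule inj_onI)
  fix a b assume ab: "a \<in> {..<N}" "b \<in> {..<N}" "node_pt N a = node_pt N b"
  then have "rotation_angle N a = rotation_angle N b"
    using rotation_angle_bounds[of N] by (intro cis_eq_imp_eq) (auto simp: cis_rotation_angle)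
  then show "a = b" using ab(1,2) inj_on_rotation_angle by (auto dest: inj_onD)
qed

lemma rotate_node_pt:
  assumes "j < N" shows "cis (rotation_angle N j) * node_pt N n = node_pt N (cyclic_shift N j n)"
  using assms
  by (simp add: cis_rotation_angle cyclic_shift_def node_pt_mod add.commute flip: node_pt_add)

lemma rotate_chord:
  assumes "j < N"
  shows "(\<lambda>z. cis (rotation_angle N j) * z) ` chord N e = chord N (cyclic_shift N j ` e)"
  using assms
  by (simp add: chord_def convex_hull_linear_image[OF linear_times] image_image rotate_node_pt)

lemma rotate_segment: "(\<lambda>z. c * z) ` closed_segment u v = closed_segment (c * u) (c * v :: complex)"
  by (rule closed_segment_linear_image[symmetric]) (rule linear_times)

lemma chord_pair: "chord N {a, b} = closed_segment (node_pt N a) (node_pt N b)"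
  by (simp add: chord_def segment_convex_hull)

lemma inj_on_chord: "inj_on (chord N) (node_pairs N)"
proof (rule inj_onI)
  fix e e' assume "e \<in> node_pairs N" "e' \<in> node_pairs N" "chord N e = chord N e'"
  then obtain a b c d where "e = {a, b}" "e' = {c, d}" "a < N" "b < N" "c < N" "d < N"
    "node_pt N ` {a, b} = node_pt N ` {c, d}"
    by (auto simp: node_pairs_def chord_pair)
  then show "e = e'"
    using inj_on_image_eq_iff[OF inj_on_node_pt, where A = "{a, b}" and B = "{c, d}"] by auto
qed

lemma cyclic_shift_node_pairs:
  assumes "0 < N" "e \<in> node_pairs N" shows "cyclic_shift N j ` e \<in> node_pairs N"
proof -
  obtain a b where "e = {a, b}" using assms(2) by (auto simp: node_pairs_def)
  moreover have "cyclic_shift N j a < N" "cyclic_shift N j b < N"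
    using assms(1) by (simp_all add: cyclic_shift_less)
  ultimately show ?thesis unfolding node_pairs_def by blast
qed

lemma rotated_chords_eq_iff:
  assumes "j < N" "E \<subseteq> node_pairs N"
  shows "(\<lambda>C. (\<lambda>z. cis (rotation_angle N j) * z) ` C) ` (chord N ` E) = chord N ` E
    \<longleftrightarrow> image (cyclic_shift N j) ` E = E"
proof -
  have shifted: "image (cyclic_shift N j) ` E \<subseteq> node_pairs N"
    using assms cyclic_shift_node_pairs[of N] by auto
  have "(\<lambda>C. (\<lambda>z. cis (rotation_angle N j) * z) ` C) ` (chord N ` E)
      = chord N ` image (cyclic_shift N j) ` E"
    using assms(1) by (simp add: image_image rotate_chord)
  then show ?thesis using inj_on_image_eq_iff[OF inj_on_chord shifted assms(2)] by simp
qed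

lemma symmetry_angle_is_rotation_angle:
  assumes N: "0 < N" and E: "E \<subseteq> node_pairs N" "E \<noteq> {}"
    and \<theta>: "0 \<le> \<theta>" "\<theta> < 2 * pi"
    and sym: "(\<lambda>C. (\<lambda>z. cis \<theta> * z) ` C) ` (chord N ` E) = chord N ` E"
  shows "\<exists>j<N. \<theta> = rotation_angle N j"
proof -
  obtain e where "e \<in> E" using E(2) by blast
  then obtain a b where "e = {a, b}" "a < N" using E(1) by (auto simp: node_pairs_def)
  have "(\<lambda>z. cis \<theta> * z) ` chord N e \<in> chord N ` E"
    using sym imageI[OF imageI[OF \<open>e \<in> E\<close>], of "\<lambda>C. (\<lambda>z. cis \<theta> * z) ` C" "chord N"]
    by simp
  then obtain e' where "e' \<in> E" "(\<lambda>z. cis \<theta> * z) ` chord N e = chord N e'" by blast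
  moreover obtain c d where "e' = {c, d}" "c < N" "d < N"
    using \<open>e' \<in> E\<close> E(1) by (auto simp: node_pairs_def)
  ultimately have "{cis \<theta> * node_pt N a, cis \<theta> * node_pt N b} = {node_pt N c, node_pt N d}"
    using \<open>e = {a, b}\<close> by (simp add: chord_pair rotate_segment)
  then obtain m where m: "m < N" "cis \<theta> * node_pt N a = node_pt N m"
    using \<open>c < N\<close> \<open>d < N\<close> by (auto simp: doubleton_eq_iff)
  define j where "j = (m + (N - a)) mod N"
  have "cis \<theta> = cis \<theta> * node_pt N (a + (N - a))"
    using N \<open>a < N\<close> node_pt_mult_self[of N 1] by simp
  also have "\<dots> = node_pt N j"
    using N by (simp add: j_def node_pt_mod node_pt_add m(2) mult.assoc)
  also have "\<dots> = cis (rotation_angle N j)"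
    using N by (simp add: j_def cis_rotation_angle)
  finally have "\<theta> = rotation_angle N j"
    using \<theta> rotation_angle_bounds[OF N] by (intro cis_eq_imp_eq) auto
  moreover have "j < N" using N by (simp add: j_def)
  ultimately show ?thesis by blast
qed

lemma card_rotational_symmetries:
  assumes N: "0 < N" and E: "E \<subseteq> node_pairs N" "E \<noteq> {}"
  shows "card {\<theta>. 0 \<le> \<theta> \<and> \<theta> < 2 * pi \<and>
      (\<lambda>C. (\<lambda>z. cis \<theta> * z) ` C) ` (chord N ` E) = chord N ` E}
    = card {j. j < N \<and> image (cyclic_shift N j) ` E = E}"
proof -
  have "{\<theta>. 0 \<le> \<theta> \<and> \<theta> < 2 * pi \<and>
        (\<lambda>C. (\<lambda>z. cis \<theta> * z) ` C) ` (chord N ` E) = chord N ` E}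
      = rotation_angle N ` {j. j < N \<and> image (cyclic_shift N j) ` E = E}"
    (is "?\<Theta> = rotation_angle N ` ?J")
  proof (intro equalityI subsetI)
    fix \<theta> assume "\<theta> \<in> ?\<Theta>"
    then obtain j where "j < N" "\<theta> = rotation_angle N j"
      using symmetry_angle_is_rotation_angle[OF N E, of \<theta>] by auto
    then show "\<theta> \<in> rotation_angle N ` ?J"
      using \<open>\<theta> \<in> ?\<Theta>\<close> rotated_chords_eq_iff[OF _ E(1)] by auto
  next
    fix \<theta> assume "\<theta> \<in> rotation_angle N ` ?J"
    then obtain j where "j \<in> ?J" "\<theta> = rotation_angle N j" by blast
    then show "\<theta> \<in> ?\<Theta>"
      using rotated_chords_eq_iff[OF _ E(1)] rotation_angle_bounds[OF N] by auto
  qed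
  moreover have "inj_on (rotation_angle N) {j. j < N \<and> image (cyclic_shift N j) ` E = E}"
    by (rule inj_on_subset[OF inj_on_rotation_angle]) auto
  ultimately show ?thesis by (simp add: card_image)
qed

definition edges :: "nat \<Rightarrow> nat list \<Rightarrow> nat set set" where
  "edges N p = {{p ! n, p ! ((n + 1) mod N)} | n. n < N}"

lemma edges_conv_image: "edges N p = (\<lambda>n. {p ! n, p ! ((n + 1) mod N)}) ` {..<N}"
  by (auto simp: edges_def)

lemma finite_edges: "finite (edges N p)"
  by (simp add: edges_conv_image)

lemma shape_eq_chords: "shape N p = chord N ` edges N p"
  unfolding edges_conv_image image_image chord_pair shape_def by auto

definition neighbours :: "nat \<Rightarrow> nat list \<Rightarrow> nat \<Rightarrow> nat set" where
  "neighbours N p a = {b. {a, b} \<in> edges N p}"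

lemma cyclic_pred_Suc_mod:
  fixes k N :: nat assumes "0 < N" shows "((k + N - 1) mod N + 1) mod N = k mod N"
proof -
  have "((k + N - 1) mod N + 1) mod N = (k + N - 1 + 1) mod N" by (rule mod_add_left_eq)
  also have "k + N - 1 + 1 = k + N" using assms by simp
  finally show ?thesis by simp
qed

lemma cyclic_Suc_pred_mod:
  fixes k N :: nat assumes "0 < N" shows "((k + 1) mod N + N - 1) mod N = k mod N"
proof -
  have "(k + 1) mod N + N - 1 = (k + 1) mod N + (N - 1)" using assms by linarith
  then have "((k + 1) mod N + N - 1) mod N = (k + 1 + (N - 1)) mod N" by (simp add: mod_add_left_eq)
  also have "k + 1 + (N - 1) = k + N" using assms by simp
  finally show ?thesis by simp
qed

lemma min_max_eq_iff:
  "(min x y, max x y) = (min u v, max u v) \<longleftrightarrow> {x, y} = {u, v :: 'a :: linorder}"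
  by (auto simp: min_def max_def doubleton_eq_iff split: if_splits)

locale cyclic_path =
  fixes N :: nat and p :: "nat list"
  assumes path: "is_path N p" and two_le: "2 \<le> N"
begin

lemma nth_less: "k < N \<Longrightarrow> p ! k < N"
  using path by (auto simp: is_path_def dest: nth_mem)

lemma nth_eq_iff: "i < N \<Longrightarrow> j < N \<Longrightarrow> p ! i = p ! j \<longleftrightarrow> i = j"
  using path by (simp add: is_path_def nth_eq_iff_index_eq)

lemma obtain_index:
  assumes "a < N" obtains k where "k < N" "p ! k = a"
  using path assms unfolding is_path_def by (metis in_set_conv_nth lessThan_iff)

lemma node_index_nth: "k < N \<Longrightarrow> node_index N p (p ! k) = k"
  unfolding node_index_def by (rule the_equality) (auto simp: nth_eq_iff)

lemma abs_pdiff_less: "\<bar>pdiff N p k\<bar> < int N"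
  using nth_less[of "(k + 1) mod N"] nth_less[of "k mod N"] two_le by (simp add: pdiff_def)

lemma edges_subset: "edges N p \<subseteq> node_pairs N"
proof
  fix e assume "e \<in> edges N p"
  then obtain n where "n < N" "e = {p ! n, p ! ((n + 1) mod N)}" by (auto simp: edges_def)
  moreover have "p ! n < N" "p ! ((n + 1) mod N) < N" using \<open>n < N\<close> two_le nth_less by simp_all
  ultimately show "e \<in> node_pairs N" unfolding node_pairs_def by blast
qed

lemma neighbours_nth:
  assumes "k < N"
  shows "neighbours N p (p ! k) = {p ! ((k + 1) mod N), p ! ((k + N - 1) mod N)}"
proof -
  have "{p ! k, b} \<in> edges N p \<longleftrightarrow>
      b = p ! ((k + 1) mod N) \<or> b = p ! ((k + N - 1) mod N)" for b
  proof
    assume "{p ! k, b} \<in> edges N p"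
    then obtain n where "n < N" "{p ! k, b} = {p ! n, p ! ((n + 1) mod N)}"
      by (auto simp: edges_def)
    then consider "k = n" "b = p ! ((n + 1) mod N)" | "k = (n + 1) mod N" "b = p ! n"
      using assms two_le by (auto simp: doubleton_eq_iff nth_eq_iff)
    then show "b = p ! ((k + 1) mod N) \<or> b = p ! ((k + N - 1) mod N)"
      by cases (use \<open>n < N\<close> cyclic_Suc_pred_mod[of N n] two_le in auto)
  next
    assume "b = p ! ((k + 1) mod N) \<or> b = p ! ((k + N - 1) mod N)"
    then show "{p ! k, b} \<in> edges N p"
    proof
      assume "b = p ! ((k + 1) mod N)"
      then show ?thesis using assms by (auto simp: edges_def)
    next
      assume "b = p ! ((k + N - 1) mod N)"
      then have "{p ! k, b} = {p ! ((k + N - 1) mod N), p ! (((k + N - 1) mod N + 1) mod N)}"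
        using assms two_le cyclic_pred_Suc_mod[of N k] by auto
      then show ?thesis
        using two_le unfolding edges_def by (intro CollectI exI[of _ "(k + N - 1) mod N"]) auto
    qed
  qed
  then show ?thesis by (auto simp: neighbours_def)
qed

lemma neighbours_subset:
  assumes "a < N" shows "neighbours N p a \<subseteq> {..<N} - {a}"
proof -
  obtain k where k: "k < N" "p ! k = a" using obtain_index assms .
  have succ: "(k + 1) mod N \<noteq> k" using k(1) two_le by (cases "k + 1 = N") auto
  moreover have "(k + N - 1) mod N \<noteq> k" using succ cyclic_pred_Suc_mod[of N k] k(1) by auto
  ultimately show ?thesis
    using k two_le by (auto simp: neighbours_nth nth_eq_iff nth_less)
qed

lemma edge_col_nth:
  assumes "k < N"
  shows "edge_col N p (p ! k) =
    (let x = chord_offset N (p ! k) (p ! ((k + 1) mod N));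
         y = chord_offset N (p ! k) (p ! ((k + N - 1) mod N))
     in (min x y, max x y))"
proof -
  have "pdiff N p ((k + N - 1) mod N) = int (p ! k) - int (p ! ((k + N - 1) mod N))"
    using assms two_le cyclic_pred_Suc_mod[of N k] by (simp add: pdiff_def)
  then show ?thesis
    using assms zero_half_step[OF abs_pdiff_less]
    by (simp add: edge_col_def node_index_nth chord_offset_def pdiff_def)
qed

lemma edge_col_eq_iff:
  assumes "a < N" "c < N"
  shows "edge_col N p a = edge_col N p c \<longleftrightarrow>
    chord_offset N a ` neighbours N p a = chord_offset N c ` neighbours N p c"
proof -
  have col: "\<exists>x y. edge_col N p b = (min x y, max x y) \<and>
      chord_offset N b ` neighbours N p b = {x, y}" if "b < N" for b
  proof -
    obtain k where k: "k < N" "p ! k = b" using obtain_index \<open>b < N\<close> .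
    show ?thesis unfolding k(2)[symmetric] edge_col_nth[OF k(1)] neighbours_nth[OF k(1)] Let_def
      by auto
  qed
  show ?thesis using col[OF assms(1)] col[OF assms(2)] min_max_eq_iff by metis
qed

lemma edge_col_shift_iff:
  assumes a: "a < N"
  shows "edge_col N p (cyclic_shift N j a) = edge_col N p a \<longleftrightarrow>
    neighbours N p (cyclic_shift N j a) = cyclic_shift N j ` neighbours N p a"
proof -
  let ?s = "cyclic_shift N j" and ?c = "cyclic_shift N j a"
  have c: "?c < N" using two_le by (simp add: cyclic_shift_less)
  have offsets: "chord_offset N a ` neighbours N p a = chord_offset N ?c ` ?s ` neighbours N p a"
    by (simp add: image_image chord_offset_cyclic_shift)
  have shifted: "?s ` neighbours N p a \<subseteq> {..<N} - {?c}"
  proof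
    fix x assume "x \<in> ?s ` neighbours N p a"
    then obtain b where b: "b \<in> {..<N} - {a}" "x = ?s b" using neighbours_subset[OF a] by blast
    have "?s b \<noteq> ?c" using b(1) a inj_on_cyclic_shift[of N j] unfolding inj_on_def by blast
    then show "x \<in> {..<N} - {?c}" using b two_le by (simp add: cyclic_shift_less)
  qed
  have "edge_col N p ?c = edge_col N p a \<longleftrightarrow>
      chord_offset N ?c ` neighbours N p ?c = chord_offset N ?c ` ?s ` neighbours N p a"
    using edge_col_eq_iff[OF c a] offsets by simp
  also have "\<dots> \<longleftrightarrow> neighbours N p ?c = ?s ` neighbours N p a"
    by (rule inj_on_image_eq_iff[OF inj_on_chord_offset[OF c] neighbours_subset[OF c] shifted])
  finally show ?thesis .
qed

lemma edges_Pow: "edges N p \<subseteq> Pow {..<N}"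
  using edges_subset by (auto simp: node_pairs_def)

lemma shifted_edge_iff:
  assumes "image (cyclic_shift N j) ` edges N p = edges N p" "a < N" "b < N"
  shows "{cyclic_shift N j a, cyclic_shift N j b} \<in> edges N p \<longleftrightarrow> {a, b} \<in> edges N p"
proof -
  have "{a, b} \<in> Pow {..<N}" using assms(2,3) by simp
  then have "cyclic_shift N j ` {a, b} \<in> image (cyclic_shift N j) ` edges N p
      \<longleftrightarrow> {a, b} \<in> edges N p"
    by (rule inj_on_image_mem_iff[OF inj_on_image_Pow[OF inj_on_cyclic_shift] _ edges_Pow])
  then show ?thesis using assms(1) by simp
qed

lemma neighbours_shift_if_edges_shift:
  assumes E: "image (cyclic_shift N j) ` edges N p = edges N p" and a: "a < N"
  shows "neighbours N p (cyclic_shift N j a) = cyclic_shift N j ` neighbours N p a"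
proof
  let ?s = "cyclic_shift N j"
  show "?s ` neighbours N p a \<subseteq> neighbours N p (?s a)"
    using neighbours_subset[OF a] shifted_edge_iff[OF E a] by (auto simp: neighbours_def)
  show "neighbours N p (?s a) \<subseteq> ?s ` neighbours N p a"
  proof
    fix x assume x: "x \<in> neighbours N p (?s a)"
    then have "x < N" using neighbours_subset[of "?s a"] two_le by (auto simp: cyclic_shift_less)
    then obtain b where "b < N" "x = ?s b" using cyclic_shift_image[of N j] two_le by auto
    then show "x \<in> ?s ` neighbours N p a"
      using x shifted_edge_iff[OF E a] by (auto simp: neighbours_def)
  qed
qed

lemma edges_shift_if_neighbours_shift:
  assumes nb: "\<forall>a<N. neighbours N p (cyclic_shift N j a) = cyclic_shift N j ` neighbours N p a"
  shows "image (cyclic_shift N j) ` edges N p = edges N p"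
proof (rule endo_inj_surj[OF finite_edges])
  let ?s = "cyclic_shift N j"
  show "image ?s ` edges N p \<subseteq> edges N p"
  proof
    fix e assume "e \<in> image ?s ` edges N p"
    then obtain a b where ab: "{a, b} \<in> edges N p" "a < N" "b < N" "e = {?s a, ?s b}"
      using edges_subset by (auto simp: node_pairs_def)
    then have "?s b \<in> neighbours N p (?s a)" using nb by (auto simp: neighbours_def)
    then show "e \<in> edges N p" using ab by (simp add: neighbours_def)
  qed
  show "inj_on (image ?s) (edges N p)"
    using inj_on_image_Pow[OF inj_on_cyclic_shift] edges_Pow by (rule inj_on_subset)
qed

lemma edges_shift_iff_edge_col:
  "image (cyclic_shift N j) ` edges N p = edges N p \<longleftrightarrow>
    (\<forall>n<N. edge_col N p (cyclic_shift N j n) = edge_col N p n)"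
proof
  assume "image (cyclic_shift N j) ` edges N p = edges N p"
  then show "\<forall>n<N. edge_col N p (cyclic_shift N j n) = edge_col N p n"
    by (simp add: edge_col_shift_iff neighbours_shift_if_edges_shift)
next
  assume "\<forall>n<N. edge_col N p (cyclic_shift N j n) = edge_col N p n"
  then show "image (cyclic_shift N j) ` edges N p = edges N p"
    by (intro edges_shift_if_neighbours_shift) (simp add: edge_col_shift_iff)
qed

lemma O_rot_eq_card_edge_symmetries:
  "O_rot N p = card {j. j < N \<and> image (cyclic_shift N j) ` edges N p = edges N p}"
proof -
  have "edges N p \<noteq> {}" using two_le by (simp add: edges_conv_image lessThan_empty_iff)
  then show ?thesis
    using card_rotational_symmetries[OF _ edges_subset] two_le
    by (simp add: O_rot_def shape_eq_chords)
qed

end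

theorem mainTheorem6:
  fixes N :: nat and p :: "nat list" and K :: nat
  assumes "N \<ge> 2"
    and "star_path N p"
    and "K = (LEAST K. 0 < K \<and> (\<forall>n<N. edge_col N p ((n + K) mod N) = edge_col N p n))"
  shows "real (O_rot N p) = real N / real K"
proof -
  interpret cyclic_path N p
    using assms(1,2) by unfold_locales (simp_all add: star_path_def)
  have "K = (LEAST K. 0 < K \<and> cyclic_period N (edge_col N p) K)"
    using assms(3) by (simp add: cyclic_period_def cyclic_shift_def)
  note K = least_cyclic_period[OF _ this]
  have "K dvd N" using K(2) assms(1) cyclic_period_self by auto
  have "O_rot N p = card {j. j < N \<and> cyclic_period N (edge_col N p) j}"
    by (simp add: O_rot_eq_card_edge_symmetries edges_shift_iff_edge_col cyclic_period_def)
  also have "\<dots> = card {j. j < N \<and> K dvd j}" using K(2) assms(1) by simp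
  also have "\<dots> = N div K" using card_multiples_less K(1) assms(1) \<open>K dvd N\<close> by simp
  finally show ?thesis using \<open>K dvd N\<close> by (simp add: real_of_nat_div)
qed

end
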